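(* Let $\xi_1,\dots,\xi_S$ be finitely many scenarios, $\varepsilon\in(0,1)$, and let $g(\cdot,\xi_i):\mathbb{R}^n\to\mathbb{R}$ be Lipschitz continuous for all $i=1,\dots,S$. Then the quantile function $q$ is Lipschitz continuous. Moreover, if for some $\hat x$ the index $i(\hat x)$ is unique and $g(\cdot,\xi_{i(\hat x)})$ is differentiable around $\hat x$, then $q$ is differentiable at $\hat x$.
   Context: The quantile function is $q(x):=\inf\{t\mid \frac1S\sum_{i=1}^S\chi(g(x,\xi_i)\le t)\ge 1-\varepsilon\}$, where $\chi$ is the $0$-$1$ indicator function (i.e. the $(1-\varepsilon)$-quantile of $g(x,\xi)$ when $\xi$ is uniformly distributed on $\{\xi_1,\dots,\xi_S\}$). For every $x$ there is an index $i(x)\in\{1,\dots,S\}$ with $q(x)=g(x,\xi_{i(x)})$; "$i(\hat x)$ is unique" means that exactly one index $i$ satisfies $g(\hat x,\xi_i)=q(\hat x)$. *)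

theory Defs
  imports "HOL-Analysis.Analysis"
begin

text \<open>Empirical (1 - eps)-quantile of g(x, xi) with xi uniform on the scenarios
  xi_1..xi_S; scenario i is encoded by the function g i.\<close>
definition quantile_fun ::
  "nat \<Rightarrow> real \<Rightarrow> (nat \<Rightarrow> 'a \<Rightarrow> real) \<Rightarrow> 'a \<Rightarrow> real" where
  "quantile_fun S eps g x =
     Inf {t. (\<Sum>i\<in>{1..S}. if g i x \<le> t then 1 else 0) / real S \<ge> 1 - eps}"

end

theory Submission
  imports Defs
begin

text \<open>The quantile function is Lipschitz because it is a pointwise order statistic of Lipschitz
  functions: shifting every scenario value by at most \<open>d\<close> shifts the quantile by at most \<open>d\<close>.
  The quantile is always attained by some scenario; if at \<open>xh\<close> it is attained by a single
  scenario \<open>i\<close>, then by continuity the strict order between \<open>g i\<close> and every other \<open>g j\<close> persists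
  near \<open>xh\<close>, so the quantile coincides with \<open>g i\<close> on a neighbourhood of \<open>xh\<close> and inherits its
  differentiability.\<close>

definition empirical_quantile :: "'i set \<Rightarrow> real \<Rightarrow> ('i \<Rightarrow> real) \<Rightarrow> real" where
  "empirical_quantile I c v = Inf {t. c \<le> real (card {i\<in>I. v i \<le> t})}"

lemma card_le_card_below_max_value:
  fixes v :: "'i \<Rightarrow> 'b::linorder"
  assumes "finite I" "J \<subseteq> I" "J \<noteq> {}"
  obtains j where "j \<in> J" "card J \<le> card {i\<in>I. v i \<le> v j}"
proof -
  have fin: "finite (v ` J)" using assms(1,2) finite_subset by blast
  have "Max (v ` J) \<in> v ` J" using fin assms(3) by (intro Max_in) auto
  then obtain j where j: "j \<in> J" "v j = Max (v ` J)" by auto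
  have "J \<subseteq> {i\<in>I. v i \<le> v j}" using assms(2) fin j(2) by auto
  then have "card J \<le> card {i\<in>I. v i \<le> v j}" by (rule card_mono[rotated]) (use assms(1) in auto)
  with j(1) show thesis by (rule that)
qed

context
  fixes I :: "'i set" and c :: real
  assumes finite_I: "finite I" and c_pos: "0 < c" and c_le_card: "c \<le> real (card I)"
begin

lemma nonempty_if_card_ge: "c \<le> real (card A) \<Longrightarrow> A \<noteq> {}"
  using c_pos by auto

lemma empirical_quantile_le:
  assumes "c \<le> real (card {i\<in>I. v i \<le> t})"
  shows "empirical_quantile I c v \<le> t"
  unfolding empirical_quantile_def
proof (rule cInf_lower)
  show "bdd_below {t. c \<le> real (card {i\<in>I. v i \<le> t})}"
  proof
    fix s assume "s \<in> {t. c \<le> real (card {i\<in>I. v i \<le> t})}"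
    then have "{i\<in>I. v i \<le> s} \<noteq> {}" by (intro nonempty_if_card_ge) simp
    then obtain i where "i \<in> I" "v i \<le> s" by blast
    then show "Min (v ` I) \<le> s" using finite_I by (meson Min_le finite_imageI imageI order_trans)
  qed
qed (use assms in simp)

lemma empirical_quantile_attained:
  "\<exists>j\<in>I. v j = empirical_quantile I c v \<and> c \<le> real (card {i\<in>I. v i \<le> v j})"
proof -
  define T where "T = {t. c \<le> real (card {i\<in>I. v i \<le> t})}"
  define A where "A = T \<inter> v ` I"
  have A_below: "\<exists>a\<in>A. a \<le> t" if "t \<in> T" for t
  proof -
    have ne: "{i\<in>I. v i \<le> t} \<noteq> {}" using that by (intro nonempty_if_card_ge) (simp add: T_def)
    obtain j where j: "j \<in> {i\<in>I. v i \<le> t}" "card {i\<in>I. v i \<le> t} \<le> card {i\<in>I. v i \<le> v j}"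
      by (rule card_le_card_below_max_value[OF finite_I _ ne, where v=v]) auto
    then have "v j \<in> T" using that by (simp add: T_def)
    with j(1) show ?thesis unfolding A_def by blast
  qed
  have "{i\<in>I. v i \<le> Max (v ` I)} = I" using finite_I by auto
  then have "Max (v ` I) \<in> T" using c_le_card by (simp add: T_def)
  then have "A \<noteq> {}" using A_below by blast
  have "finite A" using finite_I unfolding A_def by simp
  from this \<open>A \<noteq> {}\<close> have Min_A: "Min A \<in> T \<inter> v ` I" unfolding A_def by (rule Min_in)
  have "Inf T = Min A"
  proof (rule antisym)
    show "Inf T \<le> Min A"
      using Min_A empirical_quantile_le unfolding T_def empirical_quantile_def by blast
    show "Min A \<le> Inf T"
    proof (rule cInf_greatest)
      show "T \<noteq> {}" using Min_A by blast
      show "Min A \<le> t" if "t \<in> T" for t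
        using A_below[OF that] \<open>finite A\<close> by (meson Min_le order_trans)
    qed
  qed
  then show ?thesis using Min_A unfolding T_def empirical_quantile_def by auto
qed

lemma card_below_empirical_quantile:
  "c \<le> real (card {i\<in>I. v i \<le> empirical_quantile I c v})"
  using empirical_quantile_attained[of v] by force

lemma card_strictly_below_empirical_quantile:
  "real (card {i\<in>I. v i < empirical_quantile I c v}) < c"
proof (rule ccontr)
  let ?J = "{i\<in>I. v i < empirical_quantile I c v}"
  assume "\<not> real (card ?J) < c"
  then have J: "c \<le> real (card ?J)" by simp
  then have ne: "?J \<noteq> {}" by (rule nonempty_if_card_ge)
  obtain j where "j \<in> ?J" "card ?J \<le> card {i\<in>I. v i \<le> v j}"
    by (rule card_le_card_below_max_value[OF finite_I _ ne, where v=v]) auto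
  with J have "empirical_quantile I c v \<le> v j" by (intro empirical_quantile_le) auto
  with \<open>j \<in> ?J\<close> show False by simp
qed

lemma empirical_quantile_le_shift:
  assumes "\<forall>i\<in>I. w i \<le> v i + d"
  shows "empirical_quantile I c w \<le> empirical_quantile I c v + d"
proof (rule empirical_quantile_le)
  let ?q = "empirical_quantile I c v"
  have "{i\<in>I. v i \<le> ?q} \<subseteq> {i\<in>I. w i \<le> ?q + d}" using assms by force
  then have "card {i\<in>I. v i \<le> ?q} \<le> card {i\<in>I. w i \<le> ?q + d}"
    by (rule card_mono[rotated]) (use finite_I in auto)
  then show "c \<le> real (card {i\<in>I. w i \<le> ?q + d})"
    using card_below_empirical_quantile[of v] by linarith
qed

lemma lipschitz_on_empirical_quantile:
  assumes "\<forall>i\<in>I. L-lipschitz_on U (g i)"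
  shows "L-lipschitz_on U (\<lambda>x. empirical_quantile I c (\<lambda>i. g i x))"
proof (rule lipschitz_onI)
  obtain i where "i \<in> I" using nonempty_if_card_ge[OF c_le_card] by blast
  then show "0 \<le> L" using assms lipschitz_on_nonneg by blast
  fix x y assume "x \<in> U" "y \<in> U"
  then have "\<forall>i\<in>I. \<bar>g i x - g i y\<bar> \<le> L * dist x y"
    using assms lipschitz_onD by (fastforce simp: dist_real_def)
  then have "\<forall>i\<in>I. g i x \<le> g i y + L * dist x y" "\<forall>i\<in>I. g i y \<le> g i x + L * dist x y"
    by auto
  from this[THEN empirical_quantile_le_shift]
  show "dist (empirical_quantile I c (\<lambda>i. g i x)) (empirical_quantile I c (\<lambda>i. g i y))
      \<le> L * dist x y"
    by (simp add: dist_real_def abs_le_iff)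
qed

lemma empirical_quantile_eq_if_same_order:
  assumes j: "j \<in> I" "v j = empirical_quantile I c v"
    and order: "\<forall>l\<in>I. (w l \<le> w j \<longleftrightarrow> v l \<le> v j) \<and> (w l < w j \<longleftrightarrow> v l < v j)"
  shows "empirical_quantile I c w = w j"
proof (rule antisym)
  have "{i\<in>I. w i \<le> w j} = {i\<in>I. v i \<le> v j}" using order by auto
  then show "empirical_quantile I c w \<le> w j"
    using card_below_empirical_quantile[of v] j(2) by (intro empirical_quantile_le) simp
  show "w j \<le> empirical_quantile I c w"
  proof (rule ccontr)
    assume "\<not> w j \<le> empirical_quantile I c w"
    then have "{i\<in>I. w i \<le> empirical_quantile I c w} \<subseteq> {i\<in>I. v i < v j}"
      using order by fastforce
    then have "card {i\<in>I. w i \<le> empirical_quantile I c w} \<le> card {i\<in>I. v i < v j}"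
      by (rule card_mono[rotated]) (use finite_I in auto)
    then have "c \<le> real (card {i\<in>I. v i < empirical_quantile I c v})"
      using card_below_empirical_quantile[of w] j(2) by simp
    with card_strictly_below_empirical_quantile[of v] show False by linarith
  qed
qed

lemma eventually_empirical_quantile_eq:
  assumes cont: "\<forall>l\<in>I. isCont (g l) x0"
    and j: "j \<in> I" "g j x0 = empirical_quantile I c (\<lambda>i. g i x0)"
    and unique: "\<forall>l\<in>I. g l x0 = g j x0 \<longrightarrow> l = j"
  shows "\<forall>\<^sub>F x in nhds x0. empirical_quantile I c (\<lambda>i. g i x) = g j x"
proof -
  have "\<forall>\<^sub>F x in nhds x0. (g l x \<le> g j x \<longleftrightarrow> g l x0 \<le> g j x0) \<and> (g l x < g j x \<longleftrightarrow> g l x0 < g j x0)"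
    if l: "l \<in> I" for l
  proof (cases "l = j")
    case False
    have lim: "((\<lambda>x. g l x - g j x) \<longlongrightarrow> g l x0 - g j x0) (nhds x0)"
      using cont l j(1) by (intro tendsto_intros) (auto simp: isCont_def tendsto_at_iff_tendsto_nhds)
    consider "g l x0 < g j x0" | "g l x0 > g j x0" using unique l False by fastforce
    then show ?thesis
    proof cases
      case 1
      with order_tendstoD(2)[OF lim, of 0] show ?thesis by (auto elim: eventually_mono)
    next
      case 2
      with order_tendstoD(1)[OF lim, of 0] show ?thesis by (auto elim: eventually_mono)
    qed
  qed simp
  then have "\<forall>\<^sub>F x in nhds x0. \<forall>l\<in>I.
      (g l x \<le> g j x \<longleftrightarrow> g l x0 \<le> g j x0) \<and> (g l x < g j x \<longleftrightarrow> g l x0 < g j x0)"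
    using finite_I by (intro eventually_ball_finite) auto
  then show ?thesis
    by (rule eventually_mono) (rule empirical_quantile_eq_if_same_order[OF j])
qed


lemma empirical_quantile_differentiable_at:
  fixes g :: "'i \<Rightarrow> 'a::real_normed_vector \<Rightarrow> real"
  assumes cont: "\<forall>l\<in>I. isCont (g l) x0"
    and j: "j \<in> I" "g j x0 = empirical_quantile I c (\<lambda>i. g i x0)"
    and unique: "\<forall>l\<in>I. g l x0 = g j x0 \<longrightarrow> l = j"
    and diff: "g j differentiable at x0"
  shows "(\<lambda>x. empirical_quantile I c (\<lambda>i. g i x)) differentiable at x0"
proof -
  have ev: "\<forall>\<^sub>F x in at x0. g j x = empirical_quantile I c (\<lambda>i. g i x)"
    using eventually_empirical_quantile_eq[OF cont j unique]
    unfolding eventually_at_filter by (rule eventually_mono) simp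
  obtain D where D: "(g j has_derivative D) (at x0)"
    using diff unfolding differentiable_def by blast
  show ?thesis
    using has_derivative_transform_eventually[OF D ev j(2) UNIV_I]
    unfolding differentiable_def by blast
qed

end

lemma quantile_fun_eq_empirical_quantile:
  assumes "S \<ge> 1"
  shows "quantile_fun S eps g x = empirical_quantile {1..S} ((1 - eps) * real S) (\<lambda>i. g i x)"
proof -
  have "(\<Sum>i\<in>{1..S}. if g i x \<le> t then 1 else 0) = real (card {i\<in>{1..S}. g i x \<le> t})" for t
    by (simp add: sum.If_cases Int_def)
  with assms show ?thesis
    unfolding quantile_fun_def empirical_quantile_def by (simp add: le_divide_eq)
qed

theorem lemmaA1:
  fixes S :: nat and eps :: real and g :: "nat \<Rightarrow> real ^ 'n \<Rightarrow> real"
  assumes "S \<ge> 1"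
    and "0 < eps" and "eps < 1"
    and "\<forall>i\<in>{1..S}. \<exists>C. C-lipschitz_on UNIV (g i)"
  shows "(\<exists>C. C-lipschitz_on UNIV (quantile_fun S eps g))
    \<and> (\<forall>xh i. i \<in> {1..S} \<and> g i xh = quantile_fun S eps g xh
           \<and> (\<forall>j\<in>{1..S}. g j xh = quantile_fun S eps g xh \<longrightarrow> j = i)
           \<and> (\<exists>r>0. \<forall>y\<in>ball xh r. g i differentiable at y)
         \<longrightarrow> quantile_fun S eps g differentiable at xh)"
proof -
  let ?I = "{1..S}" and ?c = "(1 - eps) * real S"
  have q: "quantile_fun S eps g = (\<lambda>x. empirical_quantile ?I ?c (\<lambda>i. g i x))"
    using quantile_fun_eq_empirical_quantile[OF assms(1)] by (rule ext)
  have params: "finite ?I" "0 < ?c" "?c \<le> real (card ?I)"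
    using assms(1-3) by (auto simp: mult_le_cancel_right1)
  obtain C where C: "\<forall>i\<in>?I. (C i)-lipschitz_on UNIV (g i)" using assms(4) by metis
  have "C i \<le> sum C ?I" if "i \<in> ?I" for i
    using C that by (intro member_le_sum) (auto intro: lipschitz_on_nonneg)
  then have "\<forall>i\<in>?I. (sum C ?I)-lipschitz_on UNIV (g i)"
    using C lipschitz_on_le by blast
  then have "\<exists>L. L-lipschitz_on UNIV (quantile_fun S eps g)"
    unfolding q using lipschitz_on_empirical_quantile[OF params] by blast
  moreover have "quantile_fun S eps g differentiable at xh"
    if i: "i \<in> ?I" and at_q: "g i xh = quantile_fun S eps g xh"
      and unique: "\<forall>j\<in>?I. g j xh = quantile_fun S eps g xh \<longrightarrow> j = i"
      and diff: "\<exists>r>0. \<forall>y\<in>ball xh r. g i differentiable at y" for xh i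
  proof -
    have cont: "\<forall>l\<in>?I. isCont (g l) xh"
      using C by (metis lipschitz_on_continuous_on continuous_on_eq_continuous_at open_UNIV UNIV_I)
    have q_xh: "g i xh = empirical_quantile ?I ?c (\<lambda>l. g l xh)"
      and unique_xh: "\<forall>l\<in>?I. g l xh = g i xh \<longrightarrow> l = i"
      using at_q unique by (simp_all add: q)
    have "g i differentiable at xh" using diff by (metis centre_in_ball)
    then show ?thesis
      unfolding q by (rule empirical_quantile_differentiable_at[OF params cont i q_xh unique_xh])
  qed
  ultimately show ?thesis by blast
qed

end
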